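(* Let $\mathcal{S}$ be a finite thick generalized quadrangle of order $(s,t)$ with a group $G$ of automorphisms acting regularly on the points. Then for each $g\in G$ with $g^2\ne 1$, \[|\mathcal{L}_2(g)|<(1+st)(2+\sqrt{s+t}),\] where $\mathcal{L}_2(g)$ is the set of lines $\ell$ such that $\ell^g$ and $\ell$ are distinct concurrent lines.
   Context: A generalized quadrangle of order $(s,t)$: each line has $s+1$ points, each point is on $t+1$ lines, and for each non-incident point-line pair $(P,\ell)$ there is a unique point on $\ell$ collinear with $P$; it is thick if $\min\{s,t\}\ge 2$. *)

theory Defs
  imports Complex_Main "HOL-Combinatorics.Permutations"
begin

text \<open>A finite incidence structure is given by a point set P and a set L of lines,
each line being represented by its set of points.\<close>

definition collinear :: "'p set set \<Rightarrow> 'p \<Rightarrow> 'p \<Rightarrow> bool" where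
  "collinear L x y \<longleftrightarrow> (\<exists>m\<in>L. x \<in> m \<and> y \<in> m)"

definition GQ :: "'p set \<Rightarrow> 'p set set \<Rightarrow> nat \<Rightarrow> nat \<Rightarrow> bool" where
  "GQ P L s t \<longleftrightarrow>
     (\<forall>l\<in>L. l \<subseteq> P \<and> card l = s + 1) \<and>
     (\<forall>x\<in>P. card {l\<in>L. x \<in> l} = t + 1) \<and>
     (\<forall>l\<in>L. \<forall>m\<in>L. l \<noteq> m \<longrightarrow> card (l \<inter> m) \<le> 1) \<and>
     (\<forall>x\<in>P. \<forall>l\<in>L. x \<notin> l \<longrightarrow> (\<exists>!y. y \<in> l \<and> collinear L x y))"

definition thick_GQ :: "'p set \<Rightarrow> 'p set set \<Rightarrow> nat \<Rightarrow> nat \<Rightarrow> bool" where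
  "thick_GQ P L s t \<longleftrightarrow> GQ P L s t \<and> min s t \<ge> 2"

definition automorphism :: "'p set \<Rightarrow> 'p set set \<Rightarrow> ('p \<Rightarrow> 'p) \<Rightarrow> bool" where
  "automorphism P L g \<longleftrightarrow> g permutes P \<and> (\<forall>l. l \<subseteq> P \<longrightarrow> (g ` l \<in> L \<longleftrightarrow> l \<in> L))"

definition automorphism_group :: "'p set \<Rightarrow> 'p set set \<Rightarrow> ('p \<Rightarrow> 'p) set \<Rightarrow> bool" where
  "automorphism_group P L G \<longleftrightarrow>
     (\<forall>g\<in>G. automorphism P L g) \<and> id \<in> G \<and>
     (\<forall>g\<in>G. \<forall>h\<in>G. g \<circ> h \<in> G) \<and> (\<forall>g\<in>G. inv g \<in> G)"

definition acts_regularly :: "'p set \<Rightarrow> ('p \<Rightarrow> 'p) set \<Rightarrow> bool" where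
  "acts_regularly P G \<longleftrightarrow> (\<forall>x\<in>P. \<forall>y\<in>P. \<exists>!g. g \<in> G \<and> g x = y)"

definition L2 :: "'p set set \<Rightarrow> ('p \<Rightarrow> 'p) \<Rightarrow> 'p set set" where
  "L2 L g = {l\<in>L. g ` l \<noteq> l \<and> g ` l \<inter> l \<noteq> {}}"

end

theory Submission
  imports Defs
begin

text \<open>Let N be the point-line incidence matrix. The quadrangle axioms give
(N N^T)^2 = (s+t) N N^T + (t+1) J, so on vectors v with zero sum the form
|N^T v|^2 = \<Sum>_l (\<Sum>_{p\<in>l} v p)^2 is at most (s+t)|v|^2. Regularity makes g fixed-point-free,
and then every line l of L2(g) contains exactly one point x with x^g \<in> l. The set X of these
points has |X| = |L2(g)|, and each line of L2(g) meets X in exactly {x, x^g}. Testing the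
form on the indicator of X minus its mean |X|/|P|, with |P| = (s+1)(1+st), gives
|X| (2 - (s+1)|X|/|P|)^2 < (s+t)|X|, which is the bound.\<close>

lemma quadratic_form_le_if_kernel_square:
  fixes M :: "'a \<Rightarrow> 'a \<Rightarrow> real" and v :: "'a \<Rightarrow> real"
  assumes "finite A" and "0 < a"
    and M_commute: "\<And>p q. p \<in> A \<Longrightarrow> q \<in> A \<Longrightarrow> M p q = M q p"
    and M_square: "\<And>q r. q \<in> A \<Longrightarrow> r \<in> A \<Longrightarrow> (\<Sum>p\<in>A. M q p * M p r) = a * M q r + b"
    and v_mean: "sum v A = 0"
  shows "(\<Sum>p\<in>A. \<Sum>q\<in>A. v p * v q * M p q) \<le> a * (\<Sum>p\<in>A. (v p)\<^sup>2)"
proof -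
  define W where "W = (\<Sum>p\<in>A. \<Sum>q\<in>A. v p * v q * M p q)"
  define u where "u p = (\<Sum>q\<in>A. M p q * v q)" for p
  have vu: "(\<Sum>p\<in>A. v p * u p) = W"
    unfolding u_def W_def by (simp add: sum_distrib_left mult_ac)
  \<comment> \<open>since v is orthogonal to the constants, the term b J of M^2 does not contribute\<close>
  have uu: "(\<Sum>p\<in>A. (u p)\<^sup>2) = a * W"
  proof -
    have "(u p)\<^sup>2 = (\<Sum>q\<in>A. \<Sum>r\<in>A. v q * v r * (M q p * M p r))" if "p \<in> A" for p
      unfolding u_def power2_eq_square sum_product
      by (intro sum.cong refl) (simp add: M_commute[OF that] mult_ac)
    then have "(\<Sum>p\<in>A. (u p)\<^sup>2) = (\<Sum>p\<in>A. \<Sum>q\<in>A. \<Sum>r\<in>A. v q * v r * (M q p * M p r))"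
      by (rule sum.cong[OF refl])
    also have "\<dots> = (\<Sum>q\<in>A. \<Sum>r\<in>A. \<Sum>p\<in>A. v q * v r * (M q p * M p r))"
      by (subst sum.swap, rule sum.cong[OF refl], rule sum.swap)
    also have "\<dots> = (\<Sum>q\<in>A. \<Sum>r\<in>A. v q * v r * (\<Sum>p\<in>A. M q p * M p r))"
      by (simp add: sum_distrib_left)
    also have "\<dots> = (\<Sum>q\<in>A. \<Sum>r\<in>A. a * (v q * v r * M q r) + b * v q * v r)"
      by (intro sum.cong refl) (simp add: M_square algebra_simps)
    also have "\<dots> = a * W + b * (sum v A)\<^sup>2"
      unfolding W_def power2_eq_square sum_product
      by (simp add: sum.distrib sum_distrib_left mult_ac)
    finally show ?thesis using v_mean by simp
  qed
  \<comment> \<open>u = M v, and |u|^2 = a <v, u> forces <v, u> \<le> a |v|^2\<close>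
  have "0 \<le> (\<Sum>p\<in>A. (u p - a * v p)\<^sup>2)"
    by (simp add: sum_nonneg)
  also have "\<dots> = (\<Sum>p\<in>A. (u p)\<^sup>2) - 2 * a * (\<Sum>p\<in>A. v p * u p) + a\<^sup>2 * (\<Sum>p\<in>A. (v p)\<^sup>2)"
    by (simp add: power2_diff sum.distrib sum_subtractf sum_distrib_left algebra_simps)
  also have "\<dots> = a * (a * (\<Sum>p\<in>A. (v p)\<^sup>2) - W)"
    unfolding uu vu by (simp add: power2_eq_square algebra_simps)
  finally show ?thesis
    using \<open>0 < a\<close> by (simp add: W_def zero_le_mult_iff)
qed

lemma collinear_commute: "collinear L p q = collinear L q p"
  unfolding collinear_def by blast

text \<open>The entry (p, q) of N N^T, for the point-line incidence matrix N.\<close>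

definition common_lines :: "'p set set \<Rightarrow> 'p \<Rightarrow> 'p \<Rightarrow> real" where
  "common_lines L p q = (\<Sum>m\<in>L. of_bool (p \<in> m \<and> q \<in> m))"

lemma common_lines_commute: "common_lines L p q = common_lines L q p"
  unfolding common_lines_def by (simp add: conj_commute)

locale finite_GQ =
  fixes P :: "'p set" and L :: "'p set set" and s t :: nat
  assumes GQ: "GQ P L s t" and finite_points: "finite P"
begin

lemma line_subset: "l \<in> L \<Longrightarrow> l \<subseteq> P"
  using GQ unfolding GQ_def by simp

lemma card_line: "l \<in> L \<Longrightarrow> card l = s + 1"
  using GQ unfolding GQ_def by simp

lemma finite_line: "l \<in> L \<Longrightarrow> finite l"
  using card_line card.infinite by fastforce

lemma card_lines_through: "p \<in> P \<Longrightarrow> card {l\<in>L. p \<in> l} = t + 1"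
  using GQ unfolding GQ_def by simp

lemma finite_lines: "finite L"
  using finite_subset[of L "Pow P"] line_subset finite_points by blast

lemma line_eqI:
  assumes "l \<in> L" "m \<in> L" "p \<in> l" "q \<in> l" "p \<in> m" "q \<in> m" "p \<noteq> q"
  shows "l = m"
proof (rule ccontr)
  assume "l \<noteq> m"
  then have "card (l \<inter> m) \<le> 1"
    using assms(1,2) GQ unfolding GQ_def by simp
  moreover have "card {p, q} \<le> card (l \<inter> m)"
    using assms finite_line by (intro card_mono) auto
  ultimately show False
    using \<open>p \<noteq> q\<close> by simp
qed

lemma ex1_collinear_on_line:
  "p \<in> P \<Longrightarrow> l \<in> L \<Longrightarrow> p \<notin> l \<Longrightarrow> \<exists>!q. q \<in> l \<and> collinear L p q"
  using GQ unfolding GQ_def by simp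

lemma sum_lines_through:
  assumes "p \<in> P"
  shows "(\<Sum>m\<in>L. of_bool (p \<in> m)) = real (t + 1)"
proof -
  have "L \<inter> {m. p \<in> m} = {m\<in>L. p \<in> m}"
    by blast
  then show ?thesis
    using finite_lines card_lines_through[OF assms] by simp
qed

lemma common_lines_eq_card: "common_lines L p q = card {m\<in>L. p \<in> m \<and> q \<in> m}"
proof -
  have "L \<inter> {m. p \<in> m \<and> q \<in> m} = {m\<in>L. p \<in> m \<and> q \<in> m}"
    by blast
  then show ?thesis
    using finite_lines unfolding common_lines_def by simp
qed

lemma common_lines_self: "p \<in> P \<Longrightarrow> common_lines L p p = t + 1"
  using card_lines_through by (simp add: common_lines_eq_card)

lemma common_lines_distinct:
  assumes "p \<noteq> q"
  shows "common_lines L p q = of_bool (collinear L p q)"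
proof (cases "collinear L p q")
  case True
  then obtain m where m: "m \<in> L" "p \<in> m" "q \<in> m"
    unfolding collinear_def by blast
  then have "{m\<in>L. p \<in> m \<and> q \<in> m} = {m}"
    using line_eqI[OF _ m(1) _ _ m(2,3) assms] by blast
  then show ?thesis
    using True by (simp add: common_lines_eq_card)
next
  case False
  then have no_line: "{m\<in>L. p \<in> m \<and> q \<in> m} = {}"
    unfolding collinear_def by blast
  show ?thesis
    unfolding common_lines_eq_card no_line using False by simp
qed

lemma sum_common_lines_line:
  assumes l: "l \<in> L" and q: "q \<in> P"
  shows "(\<Sum>p\<in>l. common_lines L p q) = real (s + t) * of_bool (q \<in> l) + 1"
proof (cases "q \<in> l")
  case True
  have "common_lines L p q = 1" if "p \<in> l - {q}" for p
    using that l True by (auto simp: common_lines_distinct collinear_def)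
  then have "(\<Sum>p\<in>l - {q}. common_lines L p q) = real s"
    using card_line[OF l] finite_line[OF l] True by simp
  then show ?thesis
    using sum.remove[OF finite_line[OF l] True, of "\<lambda>p. common_lines L p q"] True
    by (simp add: common_lines_self[OF q])
next
  case False
  then obtain y where y: "y \<in> l" "collinear L q y"
    and y_unique: "\<And>z. z \<in> l \<Longrightarrow> collinear L q z \<Longrightarrow> z = y"
    using ex1_collinear_on_line[OF q l] by blast
  have "common_lines L p q = of_bool (p = y)" if "p \<in> l" for p
  proof -
    have "p \<noteq> q"
      using that False by blast
    moreover have "collinear L q p \<longleftrightarrow> p = y"
      using that y y_unique by blast
    ultimately show ?thesis
      by (simp add: common_lines_distinct collinear_commute[of L p q])
  qed
  then show ?thesis
    using False y(1) finite_line[OF l] by simp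
qed

lemma sum_common_lines_product:
  assumes q: "q \<in> P" and r: "r \<in> P"
  shows "(\<Sum>p\<in>P. common_lines L q p * common_lines L p r)
    = real (s + t) * common_lines L q r + real (t + 1)"
proof -
  have "(\<Sum>p\<in>P. common_lines L q p * common_lines L p r)
      = (\<Sum>m\<in>L. \<Sum>p\<in>P. of_bool (q \<in> m) * (of_bool (p \<in> m) * common_lines L p r))"
    unfolding common_lines_def[of L q] sum_distrib_right
    by (subst sum.swap) (simp add: of_bool_conj mult_ac)
  also have "\<dots> = (\<Sum>m\<in>L. of_bool (q \<in> m) * (\<Sum>p\<in>m. common_lines L p r))"
    using finite_points line_subset
    by (intro sum.cong refl) (simp add: sum_distrib_left[symmetric] Int_absorb1)
  also have "\<dots> = (\<Sum>m\<in>L. real (s + t) * of_bool (q \<in> m \<and> r \<in> m) + of_bool (q \<in> m))"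
    by (intro sum.cong refl) (simp add: sum_common_lines_line r)
  also have "\<dots> = real (s + t) * common_lines L q r + real (t + 1)"
    by (simp add: sum.distrib sum_distrib_left common_lines_def sum_lines_through q)
  finally show ?thesis .
qed

lemma sum_common_lines_row:
  assumes "p \<in> P"
  shows "(\<Sum>q\<in>P. common_lines L p q) = real ((s + 1) * (t + 1))"
proof -
  have "(\<Sum>q\<in>P. common_lines L p q) = (\<Sum>m\<in>L. of_bool (p \<in> m) * (\<Sum>q\<in>P. of_bool (q \<in> m)))"
    unfolding common_lines_def sum_distrib_left
    by (subst sum.swap) (simp add: of_bool_conj mult_ac)
  also have "\<dots> = (\<Sum>m\<in>L. of_bool (p \<in> m) * real (s + 1))"
    using finite_points line_subset card_line
    by (intro sum.cong refl) (simp add: Int_absorb1)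
  also have "\<dots> = real (t + 1) * real (s + 1)"
    by (simp add: sum_distrib_right[symmetric] sum_lines_through assms)
  finally show ?thesis
    by (simp add: algebra_simps)
qed

lemma card_points:
  assumes "P \<noteq> {}"
  shows "card P = (s + 1) * (1 + s * t)"
proof -
  obtain l where l: "l \<in> L"
    using assms card_lines_through by fastforce
  have "(\<Sum>q\<in>P. \<Sum>p\<in>l. common_lines L p q) = real (s + t) * real (s + 1) + real (card P)"
    using finite_points line_subset[OF l] card_line[OF l]
    by (simp add: sum_common_lines_line[OF l] sum.distrib sum_distrib_left[symmetric] Int_absorb1)
  moreover have "(\<Sum>q\<in>P. \<Sum>p\<in>l. common_lines L p q) = real (s + 1) * real ((s + 1) * (t + 1))"
    using line_subset[OF l] card_line[OF l]
    by (subst sum.swap) (simp add: common_lines_commute[of L _ ] sum_common_lines_row subset_iff)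
  ultimately have "real (card P) = real ((s + 1) * (1 + s * t))"
    by (simp add: algebra_simps)
  then show ?thesis
    by (simp only: of_nat_eq_iff)
qed

lemma sum_line_sums_squared:
  "(\<Sum>l\<in>L. (\<Sum>p\<in>l. v p)\<^sup>2) = (\<Sum>p\<in>P. \<Sum>q\<in>P. v p * v q * common_lines L p q)"
proof -
  have "(\<Sum>p\<in>P. \<Sum>q\<in>P. v p * v q * common_lines L p q)
      = (\<Sum>p\<in>P. \<Sum>m\<in>L. \<Sum>q\<in>P. (of_bool (p \<in> m) * v p) * (of_bool (q \<in> m) * v q))"
    unfolding common_lines_def sum_distrib_left
    by (intro sum.cong refl, subst sum.swap) (simp add: of_bool_conj mult_ac)
  also have "\<dots> = (\<Sum>m\<in>L. (\<Sum>p\<in>P. of_bool (p \<in> m) * v p)\<^sup>2)"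
    by (subst sum.swap) (simp add: power2_eq_square sum_product)
  also have "\<dots> = (\<Sum>m\<in>L. (\<Sum>p\<in>m. v p)\<^sup>2)"
    using finite_points line_subset by (intro sum.cong refl) (simp add: Int_absorb1)
  finally show ?thesis ..
qed

lemma sum_line_sums_squared_le:
  assumes "0 < s + t" and "sum v P = 0"
  shows "(\<Sum>l\<in>L. (\<Sum>p\<in>l. v p)\<^sup>2) \<le> real (s + t) * (\<Sum>p\<in>P. (v p)\<^sup>2)"
  unfolding sum_line_sums_squared
proof (rule quadratic_form_le_if_kernel_square[OF finite_points])
  show "common_lines L p q = common_lines L q p" for p q
    by (rule common_lines_commute)
  show "(\<Sum>p\<in>P. common_lines L q p * common_lines L p r)
      = real (s + t) * common_lines L q r + real (t + 1)" if "q \<in> P" "r \<in> P" for q r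
    using sum_common_lines_product that .
qed (use assms in auto)

lemma card_two_secants_le:
  assumes S: "S \<subseteq> L" and X: "X \<subseteq> P"
    and two_secant: "\<And>l. l \<in> S \<Longrightarrow> card (l \<inter> X) = 2"
    and "0 < s + t"
  defines "c \<equiv> real (card X) / real (card P)"
  shows "real (card S) * (2 - c * real (s + 1))\<^sup>2 \<le> real (s + t) * real (card X) * (1 - c)"
proof -
  define v where "v p = of_bool (p \<in> X) - c" for p
  have finite_X: "finite X"
    using X finite_points finite_subset by blast
  have c_card_P: "c * real (card P) = real (card X)"
    using X finite_X card_mono[OF finite_points X] unfolding c_def
    by (cases "card P = 0") (auto simp: finite_points)
  have sum_X: "(\<Sum>p\<in>P. of_bool (p \<in> X)) = real (card X)"
    using finite_points X by (simp add: Int_absorb1)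
  have "sum v P = 0"
    unfolding v_def sum_subtractf sum_X using c_card_P by (simp add: mult.commute)
  with \<open>0 < s + t\<close> have "(\<Sum>l\<in>L. (\<Sum>p\<in>l. v p)\<^sup>2) \<le> real (s + t) * (\<Sum>p\<in>P. (v p)\<^sup>2)"
    by (rule sum_line_sums_squared_le)
  also have "(\<Sum>p\<in>P. (v p)\<^sup>2) = (\<Sum>p\<in>P. (1 - 2 * c) * of_bool (p \<in> X) + c\<^sup>2)"
    unfolding v_def by (intro sum.cong refl) (simp add: power2_eq_square algebra_simps)
  also have "\<dots> = real (card X) * (1 - c)"
    unfolding sum.distrib sum_distrib_left[symmetric] sum_X
    using c_card_P by (simp add: power2_eq_square algebra_simps)
  finally have sum_L: "(\<Sum>l\<in>L. (\<Sum>p\<in>l. v p)\<^sup>2) \<le> real (s + t) * real (card X) * (1 - c)"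
    by (simp add: mult.assoc)
  have "(\<Sum>p\<in>l. v p) = 2 - c * real (s + 1)" if "l \<in> S" for l
    using that S two_secant[OF that] card_line finite_line
    unfolding v_def sum_subtractf by auto
  then have "real (card S) * (2 - c * real (s + 1))\<^sup>2 = (\<Sum>l\<in>S. (\<Sum>p\<in>l. v p)\<^sup>2)"
    by simp
  also have "\<dots> \<le> (\<Sum>l\<in>L. (\<Sum>p\<in>l. v p)\<^sup>2)"
    using finite_lines S by (intro sum_mono2) auto
  finally show ?thesis
    using sum_L by linarith
qed

lemma card_lt_if_as_many_two_secants:
  assumes S: "S \<subseteq> L" and X: "X \<subseteq> P"
    and two_secant: "\<And>l. l \<in> S \<Longrightarrow> card (l \<inter> X) = 2"
    and card_eq: "card S = card X" and "0 < s + t"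
  shows "real (card X) < (1 + real s * real t) * (2 + sqrt (real s + real t))"
proof (cases "X = {}")
  case True
  then show ?thesis
    by (simp add: add_pos_nonneg)
next
  case False
  define c where "c = real (card X) / real (card P)"
  have card_X_pos: "0 < card X"
    using False X finite_points finite_subset card_gt_0_iff by blast
  have "P \<noteq> {}"
    using False X by blast
  have card_P: "real (card P) = real (s + 1) * (1 + real s * real t)"
    unfolding card_points[OF \<open>P \<noteq> {}\<close>] by (simp add: algebra_simps)
  have "0 < 1 + real s * real t"
    by (intro add_pos_nonneg) auto
  then have card_X: "real (card X) = c * real (s + 1) * (1 + real s * real t)"
    unfolding c_def card_P by simp
  have "0 < c"
    using card_X_pos card_P unfolding c_def by (simp add: add_pos_nonneg)
  have "real (card X) * (2 - c * real (s + 1))\<^sup>2 \<le> real (card X) * (real (s + t) * (1 - c))"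
    using card_two_secants_le[OF S X two_secant \<open>0 < s + t\<close>] card_eq
    unfolding c_def by (simp add: mult_ac)
  then have "(c * real (s + 1) - 2)\<^sup>2 \<le> real (s + t) * (1 - c)"
    using card_X_pos by (simp add: power2_commute)
  also have "\<dots> < real s + real t"
    using mult_pos_pos[OF \<open>0 < c\<close>, of "real (s + t)"] \<open>0 < s + t\<close> by (simp add: algebra_simps)
  finally have "c * real (s + 1) < 2 + sqrt (real s + real t)"
    using real_less_rsqrt by force
  then show ?thesis
    unfolding card_X by (simp add: add_pos_nonneg mult.commute)
qed

end

definition L2_points :: "'p set set \<Rightarrow> ('p \<Rightarrow> 'p) \<Rightarrow> 'p set" where
  "L2_points L g = {x. \<exists>l\<in>L2 L g. x \<in> l \<and> g x \<in> l}"

locale fixpoint_free_automorphism = finite_GQ +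
  fixes g :: "'p \<Rightarrow> 'p"
  assumes automorphism: "automorphism P L g"
    and no_fixpoint: "p \<in> P \<Longrightarrow> g p \<noteq> p"
begin

lemma permutes_points: "g permutes P"
  using automorphism unfolding automorphism_def by simp

lemma inj_g: "inj g"
  using permutes_inj[OF permutes_points] .

lemma image_point: "p \<in> P \<Longrightarrow> g p \<in> P"
  by (simp add: permutes_in_image[OF permutes_points])

lemma image_line:
  assumes "l \<in> L"
  shows "g ` l \<in> L"
  using automorphism line_subset[OF assms] assms unfolding automorphism_def by simp

lemma image_L2:
  assumes "l \<in> L2 L g"
  shows "g ` l \<in> L2 L g"
proof -
  have "g ` g ` l \<noteq> g ` l"
    using assms inj_g unfolding L2_def by (simp add: inj_image_eq_iff)
  moreover have "g ` (g ` l \<inter> l) \<subseteq> g ` g ` l \<inter> g ` l"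
    by blast
  ultimately show ?thesis
    using assms image_line unfolding L2_def by blast
qed

lemma L2_point_cases:
  assumes l: "l \<in> L2 L g" and x: "x \<in> l" "g x \<in> l"
    and y: "y \<in> l" "collinear L y (g y)"
  shows "y = x \<or> y = g x"
proof (rule ccontr)
  assume not_xgx: "\<not> (y = x \<or> y = g x)"
  have lL: "l \<in> L" and moved: "g ` l \<noteq> l"
    using l unfolding L2_def by auto
  have "g x \<noteq> g y"
    using not_xgx inj_g by (auto dest: injD)
  show False
  proof (cases "g y \<in> l")
    case True
    have "l = g ` l"
      using line_eqI[OF lL image_line[OF lL] x(2) True _ _ \<open>g x \<noteq> g y\<close>] x(1) y(1) by blast
    with moved show False
      by simp
  next
    case False
    have "g y \<in> P"
      using image_point line_subset[OF lL] y(1) by blast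
    moreover have "collinear L (g y) (g x)"
      unfolding collinear_def using image_line[OF lL] x(1) y(1) by blast
    moreover have "collinear L (g y) y"
      using y(2) collinear_commute by metis
    ultimately have "y = g x"
      using ex1_collinear_on_line[OF _ lL False] x(2) y(1) by blast
    with not_xgx show False
      by simp
  qed
qed

lemma L2_ex1_point_with_image:
  assumes l: "l \<in> L2 L g"
  shows "\<exists>!x. x \<in> l \<and> g x \<in> l"
proof -
  have lL: "l \<in> L" and moved: "g ` l \<noteq> l"
    using l unfolding L2_def by auto
  obtain x where x: "x \<in> l" "g x \<in> l"
    using l unfolding L2_def by blast
  have "g (g x) \<notin> l"
  proof
    assume "g (g x) \<in> l"
    moreover have "g x \<in> g ` l" "g (g x) \<in> g ` l"
      using x by auto
    moreover have "g x \<noteq> g (g x)"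
      using no_fixpoint[OF image_point, of x] line_subset[OF lL] x(1) by auto
    ultimately have "l = g ` l"
      using line_eqI[OF lL image_line[OF lL] x(2)] by blast
    with moved show False
      by simp
  qed
  moreover have "y = x \<or> y = g x" if "y \<in> l" "g y \<in> l" for y
    using L2_point_cases[OF l x that(1)] that lL unfolding collinear_def by blast
  ultimately show ?thesis
    using x by blast
qed

lemma L2_inter_L2_points:
  assumes l: "l \<in> L2 L g" and x: "x \<in> l" "g x \<in> l"
  shows "l \<inter> L2_points L g = {x, g x}"
proof
  show "l \<inter> L2_points L g \<subseteq> {x, g x}"
  proof
    fix y
    assume "y \<in> l \<inter> L2_points L g"
    then obtain m where "y \<in> l" "m \<in> L2 L g" "y \<in> m" "g y \<in> m"
      unfolding L2_points_def by blast
    then have "collinear L y (g y)"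
      unfolding collinear_def L2_def by blast
    then show "y \<in> {x, g x}"
      using L2_point_cases[OF l x \<open>y \<in> l\<close>] by blast
  qed
  show "{x, g x} \<subseteq> l \<inter> L2_points L g"
    using l x image_L2[OF l] unfolding L2_points_def by blast
qed

lemma card_L2_inter_L2_points:
  assumes l: "l \<in> L2 L g"
  shows "card (l \<inter> L2_points L g) = 2"
proof -
  obtain x where x: "x \<in> l" "g x \<in> l"
    using L2_ex1_point_with_image[OF l] by blast
  have "g x \<noteq> x"
    using no_fixpoint line_subset l x(1) unfolding L2_def by blast
  then show ?thesis
    unfolding L2_inter_L2_points[OF l x] by simp
qed

lemma card_L2_points: "card (L2_points L g) = card (L2 L g)"
proof -
  define chord where "chord l = (THE x. x \<in> l \<and> g x \<in> l)" for l
  have chord: "chord l \<in> l \<and> g (chord l) \<in> l" if "l \<in> L2 L g" for l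
    unfolding chord_def using theI'[OF L2_ex1_point_with_image[OF that]] .
  have "bij_betw chord (L2 L g) (L2_points L g)"
  proof (rule bij_betw_imageI)
    show "inj_on chord (L2 L g)"
    proof (rule inj_onI)
      fix l m
      assume l: "l \<in> L2 L g" and m: "m \<in> L2 L g" and eq: "chord l = chord m"
      have "g (chord l) \<noteq> chord l"
        using no_fixpoint line_subset chord[OF l] l unfolding L2_def by blast
      then show "l = m"
        using line_eqI[of l m "chord l" "g (chord l)"] chord[OF l] chord[OF m] l m eq
        unfolding L2_def by auto
    qed
    show "chord ` L2 L g = L2_points L g"
    proof
      show "chord ` L2 L g \<subseteq> L2_points L g"
        using chord unfolding L2_points_def by blast
      show "L2_points L g \<subseteq> chord ` L2 L g"
      proof
        fix x
        assume "x \<in> L2_points L g"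
        then obtain l where l: "l \<in> L2 L g" "x \<in> l" "g x \<in> l"
          unfolding L2_points_def by blast
        then have "chord l = x"
          unfolding chord_def using the1_equality[OF L2_ex1_point_with_image[OF l(1)]] by blast
        with l show "x \<in> chord ` L2 L g"
          by blast
      qed
    qed
  qed
  then show ?thesis
    by (simp add: bij_betw_same_card)
qed

end

lemma fixpoint_free_if_acts_regularly:
  assumes "automorphism_group P L G" and "acts_regularly P G"
    and "g \<in> G" and "g \<noteq> id" and "x \<in> P"
  shows "g x \<noteq> x"
proof
  assume "g x = x"
  have "id \<in> G"
    using assms(1) unfolding automorphism_group_def by simp
  moreover have "\<exists>!h. h \<in> G \<and> h x = x"
    using assms(2,5) unfolding acts_regularly_def by simp
  ultimately show False
    using assms(3,4) \<open>g x = x\<close> by (metis id_apply)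
qed

theorem theorem3p4:
  fixes P :: "'p set" and L :: "'p set set" and s t :: nat and G :: "('p \<Rightarrow> 'p) set"
  assumes "finite P"
    and "thick_GQ P L s t"
    and "automorphism_group P L G"
    and "acts_regularly P G"
    and "g \<in> G" and "g \<circ> g \<noteq> id"
  shows "real (card (L2 L g)) < (1 + real s * real t) * (2 + sqrt (real s + real t))"
proof -
  have GQ: "GQ P L s t" and "0 < s + t"
    using assms(2) unfolding thick_GQ_def by auto
  have "g \<noteq> id"
    using assms(6) by auto
  have "automorphism P L g"
    using assms(3,5) unfolding automorphism_group_def by blast
  interpret fixpoint_free_automorphism P L s t g
    using GQ assms(1) \<open>automorphism P L g\<close>
      fixpoint_free_if_acts_regularly[OF assms(3-5) \<open>g \<noteq> id\<close>]
    by unfold_locales auto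
  have "L2 L g \<subseteq> L" and "L2_points L g \<subseteq> P"
    using line_subset unfolding L2_def L2_points_def by auto
  then have "real (card (L2_points L g)) < (1 + real s * real t) * (2 + sqrt (real s + real t))"
    using card_L2_inter_L2_points card_L2_points[symmetric] \<open>0 < s + t\<close>
    by (rule card_lt_if_as_many_two_secants)
  then show ?thesis
    by (simp add: card_L2_points)
qed

end
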